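(* Every obliviously-computable function $f:\mathbb{N}^d\to\mathbb{N}$ is nondecreasing, i.e. $\vec{a}\le\vec{b}$ componentwise implies $f(\vec{a})\le f(\vec{b})$.
   Context: A chemical reaction network (CRN) is a pair $(\mathcal{S},\mathcal{R})$ of a finite set of species and a finite set of reactions $(\vec{R},\vec{P})\in\mathbb{N}^{\mathcal{S}}\times\mathbb{N}^{\mathcal{S}}$. A configuration is $\vec{C}\in\mathbb{N}^{\mathcal{S}}$; a reaction is applicable if $\vec{R}\le\vec{C}$ and yields $\vec{C}-\vec{R}+\vec{P}$; reachability is via finite sequences of applicable reactions. To compute $f:\mathbb{N}^d\to\mathbb{N}$ the CRN has input species $X_1,\ldots,X_d$, output species $Y$, leader species $L$; the initial configuration $\vec{I}_{\vec{x}}$ has $\vec{x}(i)$ copies of $X_i$, one $L$, nothing else. $\vec{C}$ is stable if all configurations reachable from it have the same count of $Y$. The CRN stably computes $f$ if for every $\vec{x}$ and every $\vec{C}$ reachable from $\vec{I}_{\vec{x}}$ some stable $\vec{O}$ reachable from $\vec{C}$ has $\vec{O}(Y)=f(\vec{x})$. The CRN is output-oblivious if $Y$ is never a reactant. $f$ is obliviously-computable if stably computed by an output-oblivious CRN. *)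

theory Defs
  imports Main
begin

text \<open>Species range over a finite type 's;
a configuration is a function 's \<Rightarrow> nat; a reaction is a pair (R, P) of
reactant and product vectors; a CRN is a finite set of reactions.\<close>

type_synonym 's config = "'s \<Rightarrow> nat"
type_synonym 's reaction = "'s config \<times> 's config"

definition applicable :: "'s reaction \<Rightarrow> 's config \<Rightarrow> bool" where
  "applicable r C \<longleftrightarrow> fst r \<le> C"

definition apply_reaction :: "'s reaction \<Rightarrow> 's config \<Rightarrow> 's config" where
  "apply_reaction r C = (\<lambda>s. C s - fst r s + snd r s)"

definition step :: "'s reaction set \<Rightarrow> 's config \<Rightarrow> 's config \<Rightarrow> bool" where
  "step Rs C D \<longleftrightarrow> (\<exists>r\<in>Rs. applicable r C \<and> D = apply_reaction r C)"

definition reachable :: "'s reaction set \<Rightarrow> 's config \<Rightarrow> 's config \<Rightarrow> bool" where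
  "reachable Rs = (step Rs)\<^sup>*\<^sup>*"

definition stable :: "'s reaction set \<Rightarrow> 's \<Rightarrow> 's config \<Rightarrow> bool" where
  "stable Rs Y C \<longleftrightarrow> (\<forall>D. reachable Rs C D \<longrightarrow> D Y = C Y)"

definition initial :: "nat \<Rightarrow> (nat \<Rightarrow> 's) \<Rightarrow> 's \<Rightarrow> nat list \<Rightarrow> 's config" where
  "initial d X L x = (\<lambda>s. (\<Sum>i\<in>{i. i < d \<and> X i = s}. x ! i) + (if s = L then 1 else 0))"

definition stably_computes ::
  "'s reaction set \<Rightarrow> nat \<Rightarrow> (nat \<Rightarrow> 's) \<Rightarrow> 's \<Rightarrow> 's \<Rightarrow> (nat list \<Rightarrow> nat) \<Rightarrow> bool" where
  "stably_computes Rs d X Y L f \<longleftrightarrow>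
     finite Rs \<and> inj_on X {..<d} \<and> L \<notin> X ` {..<d} \<and> Y \<notin> X ` {..<d} \<and> Y \<noteq> L \<and>
     (\<forall>x. length x = d \<longrightarrow>
        (\<forall>C. reachable Rs (initial d X L x) C \<longrightarrow>
           (\<exists>Out. reachable Rs C Out \<and> stable Rs Y Out \<and> Out Y = f x)))"

definition output_oblivious :: "'s reaction set \<Rightarrow> 's \<Rightarrow> bool" where
  "output_oblivious Rs Y \<longleftrightarrow> (\<forall>r\<in>Rs. fst r Y = 0)"

definition obliviously_computable :: "nat \<Rightarrow> (nat list \<Rightarrow> nat) \<Rightarrow> bool" where
  "obliviously_computable d f \<longleftrightarrow>
     (\<exists>(Rs :: nat reaction set) X Y L S. finite S \<and>
        (\<forall>r\<in>Rs. \<forall>s. s \<notin> S \<longrightarrow> fst r s = 0 \<and> snd r s = 0) \<and>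
        X ` {..<d} \<subseteq> S \<and> Y \<in> S \<and> L \<in> S \<and>
        output_oblivious Rs Y \<and> stably_computes Rs d X Y L f)"

end

theory Submission
  imports Defs "HOL-Library.Function_Algebras"
begin

text \<open>Adding molecules never disables a reaction, so every execution from C can be replayed
from C + E with E carried along unchanged. Starting from the larger input b, the CRN may therefore
first mimic a run of the smaller input a to a configuration with f a copies of Y, plus the surplus
b - a. From there it must still reach a configuration with f b copies of Y, and since Y is never
consumed, the count of Y can only grow: f a \<le> f b.\<close>

lemma step_add_config:
  assumes "step Rs C D"
  shows "step Rs (C + E) (D + E)"
proof -
  from assms obtain r where r: "r \<in> Rs" "fst r \<le> C" "D = apply_reaction r C"
    unfolding step_def applicable_def by blast
  have le: "fst r s \<le> C s" for s
    using r(2) by (simp add: le_fun_def)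
  have "fst r \<le> C + E"
    using le by (simp add: le_fun_def trans_le_add1)
  moreover have "D + E = apply_reaction r (C + E)"
  proof
    fix s
    show "(D + E) s = apply_reaction r (C + E) s"
      using le[of s] by (simp add: r(3) apply_reaction_def)
  qed
  ultimately show ?thesis
    using r(1) unfolding step_def applicable_def by blast
qed

lemma reachable_add_config:
  assumes "reachable Rs C D"
  shows "reachable Rs (C + E) (D + E)"
  using assms unfolding reachable_def
proof (induction rule: rtranclp_induct)
  case base
  show ?case by simp
next
  case (step D D')
  show ?case
    using step.IH step_add_config[OF step.hyps(2), of E]
    by (rule rtranclp.rtrancl_into_rtrancl[of "step Rs"])
qed

lemma reachable_output_oblivious_mono:
  assumes "output_oblivious Rs Y" and "reachable Rs C D"
  shows "C Y \<le> D Y"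
  using assms(2) unfolding reachable_def
proof (induction rule: rtranclp_induct)
  case base
  show ?case by simp
next
  case (step D D')
  then obtain r where "r \<in> Rs" "D' = apply_reaction r D"
    unfolding step_def by blast
  with assms(1) have "D Y \<le> D' Y"
    by (simp add: output_oblivious_def apply_reaction_def)
  with step.IH show ?case by simp
qed

lemma initial_le_decompose:
  assumes "\<forall>i<d. a ! i \<le> b ! i"
  obtains E where "initial d X L b = initial d X L a + E"
    and "\<forall>s. s \<notin> X ` {..<d} \<longrightarrow> E s = 0"
proof
  define E where "E s = (\<Sum>i\<in>{i. i < d \<and> X i = s}. b ! i - a ! i)" for s
  show "\<forall>s. s \<notin> X ` {..<d} \<longrightarrow> E s = 0"
    unfolding E_def by (auto intro!: sum.neutral)
  show "initial d X L b = initial d X L a + E"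
  proof
    fix s
    have "(\<Sum>i\<in>{i. i < d \<and> X i = s}. b ! i)
          = (\<Sum>i\<in>{i. i < d \<and> X i = s}. a ! i + (b ! i - a ! i))"
      using assms by (intro sum.cong) auto
    also have "\<dots> = (\<Sum>i\<in>{i. i < d \<and> X i = s}. a ! i) + E s"
      unfolding E_def by (simp add: sum.distrib)
    finally show "initial d X L b s = (initial d X L a + E) s"
      unfolding initial_def by simp
  qed
qed

lemma stably_computes_output_oblivious_mono:
  assumes comp: "stably_computes Rs d X Y L f" and obl: "output_oblivious Rs Y"
    and "length a = d" "length b = d" "\<forall>i<d. a ! i \<le> b ! i"
  shows "f a \<le> f b"
proof -
  have Y_not_input: "Y \<notin> X ` {..<d}" and
    outputs: "\<And>x C. length x = d \<Longrightarrow> reachable Rs (initial d X L x) C \<Longrightarrow>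
       \<exists>Out. reachable Rs C Out \<and> stable Rs Y Out \<and> Out Y = f x"
    using comp unfolding stably_computes_def by auto
  obtain E where init_b: "initial d X L b = initial d X L a + E"
    and "\<forall>s. s \<notin> X ` {..<d} \<longrightarrow> E s = 0"
    using initial_le_decompose[OF assms(5)] .
  with Y_not_input have "E Y = 0" by blast
  have "reachable Rs (initial d X L a) (initial d X L a)"
    unfolding reachable_def by simp
  then obtain Oa where run_a: "reachable Rs (initial d X L a) Oa" and "Oa Y = f a"
    using outputs[OF \<open>length a = d\<close>] by blast
  have "reachable Rs (initial d X L b) (Oa + E)"
    unfolding init_b using run_a by (rule reachable_add_config)
  then obtain Ob where "reachable Rs (Oa + E) Ob" "Ob Y = f b"
    using outputs[OF \<open>length b = d\<close>] by blast
  have "(Oa + E) Y \<le> Ob Y"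
    using obl \<open>reachable Rs (Oa + E) Ob\<close> by (rule reachable_output_oblivious_mono)
  with \<open>Oa Y = f a\<close> \<open>E Y = 0\<close> \<open>Ob Y = f b\<close> show ?thesis
    by simp
qed

theorem mainTheorem8:
  fixes d :: nat and f :: "nat list \<Rightarrow> nat"
  assumes "obliviously_computable d f"
  shows "\<forall>a b. length a = d \<longrightarrow> length b = d \<longrightarrow>
           (\<forall>i<d. a ! i \<le> b ! i) \<longrightarrow> f a \<le> f b"
proof -
  from assms obtain Rs :: "nat reaction set" and X Y L where
    "output_oblivious Rs Y" and "stably_computes Rs d X Y L f"
    unfolding obliviously_computable_def by (elim exE conjE) (rule that)
  then show ?thesis
    by (auto intro: stably_computes_output_oblivious_mono)
qed

end
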